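(* Under the hypotheses of the conformal-measure theorem described in the context, assume additionally that $\phi$ satisfies (H1). Then for a.e. $\omega$, every $n\ge1$, every $w=(w_0,\dots,w_{n-1})\in\mathcal W^n_\omega$ and every $x\in[w]_\omega$, $$\frac{\mu_{\theta^n\omega}(T_{\theta^{n-1}\omega}[w_{n-1}]_{\theta^{n-1}\omega})}{B_{\theta^n\omega}}\le\Lambda_n(\omega)\frac{\mu_\omega([w]_\omega)}{e^{\phi^\omega_n(x)-nP_G(\phi)}}\le B_{\theta^n\omega}\,\mu_{\theta^n\omega}(T_{\theta^{n-1}\omega}[w_{n-1}]_{\theta^{n-1}\omega}).$$ If moreover $(X,T)$ has the big image property, then $D_\omega:=\inf\{\mu_\omega(T_{\theta^{-1}\omega}[b]_{\theta^{-1}\omega}): b\in\mathcal W^1_{\theta^{-1}\omega}\}>0$ for a.e. $\omega\in\Omega_{bi}$, and hence for a.e. $\omega$, all $n$ with $\theta^n\omega\in\Omega_{bi}$, all $w\in\mathcal W^n_\omega$ and $x\in[w]_\omega$, $$B_{\theta^n\omega}^{-1}D_{\theta^n\omega}\le\Lambda_n(\omega)\frac{\mu_\omega([w]_\omega)}{e^{\phi^\omega_n(x)-nP_G(\phi)}}\le B_{\theta^n\omega}.$$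
   Context: Let $(\Omega,\mathcal F,P)$ be a probability space and $\theta:\Omega\to\Omega$ an invertible, bimeasurable, $P$-preserving, ergodic map. Let $\ell:\Omega\to\mathbb N\cup\{\infty\}$ be measurable with $\ell_\omega>1$, and for a.e. $\omega$ let $A_\omega=(\alpha_{ij}(\omega))_{0\le i<\ell_\omega,\,0\le j<\ell_{\theta\omega}}$ be a $\{0,1\}$-matrix depending measurably on $\omega$ such that every row contains an entry $1$. Put $X_\omega=\{x=(x_0,x_1,\dots): x_i<\ell_{\theta^i\omega},\ \alpha_{x_ix_{i+1}}(\theta^i\omega)=1\ \forall i\ge0\}$, $T_\omega:X_\omega\to X_{\theta\omega}$ the left shift, $X=\{(\omega,x):x\in X_\omega\}$, $T^n_\omega=T_{\theta^{n-1}\omega}\circ\cdots\circ T_\omega$. A word $w=(w_0,\dots,w_{n-1})$ is $\omega$-admissible if $w_i<\ell_{\theta^i\omega}$ for all $i<n$ and $\alpha_{w_iw_{i+1}}(\theta^i\omega)=1$ for $i<n-1$; $\mathcal W^n_\omega$ is the set of such words; $[w]_\omega=\{x\in X_\omega: x_i=w_i,\ i<n\}$; $\Omega_w=\{\omega: w\in\mathcal W^n_\omega\}$; $\mathcal W^n$ the words with $P(\Omega_w)>0$. Topologically mixing: for all $a,b\in\mathcal W^1$ there is an $\mathbb N$-valued random variable $N_{ab}$ with $[a]_\omega\cap(T^n_\omega)^{-1}[b]_{\theta^n\omega}\ne\emptyset$ whenever $\omega\in\Omega_a$, $n\ge N_{ab}(\omega)$, $\theta^n\omega\in\Omega_b$.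 Big image property: there exist measurable $\Omega_{bi}$ with $P(\Omega_{bi})>0$ and finite sets $\mathcal I^\omega_{bi}\subset\mathcal W^1_\omega$ ($\omega\in\Omega_{bi}$) such that for every $c\in\mathcal W^1_{\theta^{-1}\omega}$ there is $b\in\mathcal I^\omega_{bi}$ with $\alpha_{cb}(\theta^{-1}\omega)=1$. A potential is a measurable $\phi:X\to\mathbb R$; $\phi^\omega_n(x)=\sum_{k=0}^{n-1}\phi^{\theta^k\omega}(T^k_\omega x)$; $V^\omega_n(\phi)=\sup\{|\phi^\omega(x)-\phi^\omega(y)|: x_i=y_i\ (i<n)\}$. $\phi$ is $k$-Hölder if there are $r\in(0,1)$ and a random variable $\kappa\ge1$ with $\int\log\kappa\,dP<\infty$ and $V^\omega_j(\phi)\le\kappa(\omega)r^j$ for all $j\ge k$; $B_\omega:=\exp\sum_{j\ge1}\kappa(\theta^{-j}\omega)r^j$. (H1)/(H2): $\phi$ is 1-Hölder/2-Hölder and $\int\log B\,dP<\infty$. Ruelle operator $L^\omega_\phi f(x)=\sum_{y\in X_\omega,T_\omega y=x}e^{\phi^\omega(y)}f(y)$; (S1): $\int\log\sup L^\omega_\phi1\,dP<\infty$; (S2): $\int\log\inf L^\omega_\phi1\,dP>-\infty$. Setting of the conformal-measure theorem: $(X,T)$ topologically mixing, $\phi$ satisfies (H2),(S1),(S2), the relative Gurevič pressure $P_G(\phi)$ is finite, and $(X,T,\phi)$ is of divergence type, i.e. for a fixed $a\in\mathcal W^1$, a measurable family $\xi_\omega\in X_\omega$ with $\xi_\omega\in[a]_\omega$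 on $\Omega_a$ and some $\widetilde\Omega\subset\Omega_a$ of positive measure, $P_\omega(s)=\sum_{n:\theta^n\omega\in\widetilde\Omega}s^nL^{\omega,n}_\phi1(\xi_{\theta^n\omega})$ is finite for $s<e^{-P_G(\phi)}$ and infinite at $s=e^{-P_G(\phi)}$. Then there are $s_n\nearrow e^{-P_G(\phi)}$, $\lambda(\omega)=\lim_nP_\omega(s_n)/P_{\theta\omega}(s_n)\in(0,\infty)$ a.s., and Borel probability measures $\mu_\omega$ on $X_\omega$, positive on cylinders, with $\mu_{\theta\omega}(T_\omega E)=\lambda(\omega)\int_Ee^{P_G(\phi)-\phi^\omega}d\mu_\omega$ for all Borel $E\subset[c]_\omega$, $c\in\mathcal W^1_\omega$. $\lambda$ and $\mu_\omega$ denote these objects; $\Lambda_n(\omega)=\lambda(\omega)\lambda(\theta\omega)\cdots\lambda(\theta^{n-1}\omega)$. *)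

theory Defs
  imports "HOL-Probability.Probability"
begin

text \<open>Symbols are natural numbers; ell w :: enat is the
  number of symbols at fibre w (nat or infinity); alpha w i j is the 0/1 transition matrix
  entry (as a boolean).\<close>

type_synonym seqn = "nat \<Rightarrow> nat"

definition thinv :: "'w measure \<Rightarrow> ('w \<Rightarrow> 'w) \<Rightarrow> 'w \<Rightarrow> 'w" where
  "thinv M th = inv_into (space M) th"

definition SeqM :: "seqn measure" where
  "SeqM = PiM UNIV (\<lambda>_. count_space (UNIV :: nat set))"

definition Xfib :: "('w \<Rightarrow> 'w) \<Rightarrow> ('w \<Rightarrow> enat) \<Rightarrow> ('w \<Rightarrow> nat \<Rightarrow> nat \<Rightarrow> bool) \<Rightarrow> 'w \<Rightarrow> seqn set" where
  "Xfib th ell alpha w =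
     {x. \<forall>i. enat (x i) < ell ((th ^^ i) w) \<and> alpha ((th ^^ i) w) (x i) (x (Suc i))}"

definition shiftn :: "nat \<Rightarrow> seqn \<Rightarrow> seqn" where
  "shiftn k x = (\<lambda>i. x (i + k))"

definition words :: "('w \<Rightarrow> 'w) \<Rightarrow> ('w \<Rightarrow> enat) \<Rightarrow> ('w \<Rightarrow> nat \<Rightarrow> nat \<Rightarrow> bool) \<Rightarrow> 'w \<Rightarrow> nat \<Rightarrow> nat list set" where
  "words th ell alpha w n =
     {v. length v = n \<and> (\<forall>i<n. enat (v ! i) < ell ((th ^^ i) w))
        \<and> (\<forall>i. Suc i < n \<longrightarrow> alpha ((th ^^ i) w) (v ! i) (v ! Suc i))}"

definition cyl :: "('w \<Rightarrow> 'w) \<Rightarrow> ('w \<Rightarrow> enat) \<Rightarrow> ('w \<Rightarrow> nat \<Rightarrow> nat \<Rightarrow> bool) \<Rightarrow> 'w \<Rightarrow> nat list \<Rightarrow> seqn set" where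
  "cyl th ell alpha w v = {x \<in> Xfib th ell alpha w. \<forall>i<length v. x i = v ! i}"

definition Omega_w :: "'w measure \<Rightarrow> ('w \<Rightarrow> 'w) \<Rightarrow> ('w \<Rightarrow> enat) \<Rightarrow> ('w \<Rightarrow> nat \<Rightarrow> nat \<Rightarrow> bool) \<Rightarrow> nat list \<Rightarrow> 'w set" where
  "Omega_w M th ell alpha v = {w \<in> space M. v \<in> words th ell alpha w (length v)}"

definition Wn :: "'w measure \<Rightarrow> ('w \<Rightarrow> 'w) \<Rightarrow> ('w \<Rightarrow> enat) \<Rightarrow> ('w \<Rightarrow> nat \<Rightarrow> nat \<Rightarrow> bool) \<Rightarrow> nat \<Rightarrow> nat list set" where
  "Wn M th ell alpha n = {v. length v = n \<and> measure M (Omega_w M th ell alpha v) > 0}"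

definition ergodic_map :: "'w measure \<Rightarrow> ('w \<Rightarrow> 'w) \<Rightarrow> bool" where
  "ergodic_map M th \<longleftrightarrow>
     (\<forall>A \<in> sets M. th -` A \<inter> space M = A \<longrightarrow> measure M A = 0 \<or> measure M A = 1)"

definition phin :: "('w \<Rightarrow> seqn \<Rightarrow> real) \<Rightarrow> ('w \<Rightarrow> 'w) \<Rightarrow> 'w \<Rightarrow> nat \<Rightarrow> seqn \<Rightarrow> real" where
  "phin phi th w n x = (\<Sum>k<n. phi ((th ^^ k) w) (shiftn k x))"

definition Var :: "('w \<Rightarrow> 'w) \<Rightarrow> ('w \<Rightarrow> enat) \<Rightarrow> ('w \<Rightarrow> nat \<Rightarrow> nat \<Rightarrow> bool) \<Rightarrow> ('w \<Rightarrow> seqn \<Rightarrow> real) \<Rightarrow> 'w \<Rightarrow> nat \<Rightarrow> ereal" where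
  "Var th ell alpha phi w n =
     (SUP p \<in> {(x, y). x \<in> Xfib th ell alpha w \<and> y \<in> Xfib th ell alpha w \<and> (\<forall>i<n. x i = y i)}.
        ereal \<bar>phi w (fst p) - phi w (snd p)\<bar>)"

definition holder :: "'w measure \<Rightarrow> ('w \<Rightarrow> 'w) \<Rightarrow> ('w \<Rightarrow> enat) \<Rightarrow> ('w \<Rightarrow> nat \<Rightarrow> nat \<Rightarrow> bool) \<Rightarrow> ('w \<Rightarrow> seqn \<Rightarrow> real)
      \<Rightarrow> nat \<Rightarrow> ('w \<Rightarrow> real) \<Rightarrow> real \<Rightarrow> bool" where
  "holder M th ell alpha phi k kappa r \<longleftrightarrow>
     0 < r \<and> r < 1 \<and> kappa \<in> borel_measurable M \<and> (\<forall>w \<in> space M. 1 \<le> kappa w)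
     \<and> integrable M (\<lambda>w. ln (kappa w))
     \<and> (AE w in M. \<forall>j \<ge> k. Var th ell alpha phi w j \<le> ereal (kappa w * r ^ j))"

definition logB :: "'w measure \<Rightarrow> ('w \<Rightarrow> 'w) \<Rightarrow> ('w \<Rightarrow> real) \<Rightarrow> real \<Rightarrow> 'w \<Rightarrow> ennreal" where
  "logB M th kappa r w = (\<Sum>j. ennreal (kappa ((thinv M th ^^ Suc j) w) * r ^ Suc j))"

definition Bfun :: "'w measure \<Rightarrow> ('w \<Rightarrow> 'w) \<Rightarrow> ('w \<Rightarrow> real) \<Rightarrow> real \<Rightarrow> 'w \<Rightarrow> real" where
  "Bfun M th kappa r w = exp (enn2real (logB M th kappa r w))"

definition H1 :: "'w measure \<Rightarrow> ('w \<Rightarrow> 'w) \<Rightarrow> ('w \<Rightarrow> enat) \<Rightarrow> ('w \<Rightarrow> nat \<Rightarrow> nat \<Rightarrow> bool) \<Rightarrow> ('w \<Rightarrow> seqn \<Rightarrow> real)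
      \<Rightarrow> ('w \<Rightarrow> real) \<Rightarrow> real \<Rightarrow> bool" where
  "H1 M th ell alpha phi kappa r \<longleftrightarrow>
     holder M th ell alpha phi 1 kappa r \<and> (\<integral>\<^sup>+ w. logB M th kappa r w \<partial>M) < \<infinity>"

definition H2 :: "'w measure \<Rightarrow> ('w \<Rightarrow> 'w) \<Rightarrow> ('w \<Rightarrow> enat) \<Rightarrow> ('w \<Rightarrow> nat \<Rightarrow> nat \<Rightarrow> bool) \<Rightarrow> ('w \<Rightarrow> seqn \<Rightarrow> real) \<Rightarrow> bool" where
  "H2 M th ell alpha phi \<longleftrightarrow>
     (\<exists>kappa r. holder M th ell alpha phi 2 kappa r \<and> (\<integral>\<^sup>+ w. logB M th kappa r w \<partial>M) < \<infinity>)"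

text \<open>n-th iterate of the Ruelle operator applied to 1:
  L^{w,n} 1 (x) = sum over y in X_w with T^n y = x of exp(phi_n^w(y))\<close>
definition Lop :: "('w \<Rightarrow> 'w) \<Rightarrow> ('w \<Rightarrow> enat) \<Rightarrow> ('w \<Rightarrow> nat \<Rightarrow> nat \<Rightarrow> bool) \<Rightarrow> ('w \<Rightarrow> seqn \<Rightarrow> real) \<Rightarrow> 'w \<Rightarrow> nat \<Rightarrow> seqn \<Rightarrow> ennreal" where
  "Lop th ell alpha phi w n x =
     (\<integral>\<^sup>+ y. ennreal (exp (phin phi th w n y))
        \<partial>count_space {y \<in> Xfib th ell alpha w. shiftn n y = x})"

definition elog :: "ennreal \<Rightarrow> ereal" where
  "elog t = (if t = \<top> then \<infinity> else if t = 0 then - \<infinity> else ereal (ln (enn2real t)))"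

text \<open>(S1): integral of log sup L1 < infinity (positive part integrable);
      (S2): integral of log inf L1 > -infinity (negative part integrable)\<close>
definition S1 :: "'w measure \<Rightarrow> ('w \<Rightarrow> 'w) \<Rightarrow> ('w \<Rightarrow> enat) \<Rightarrow> ('w \<Rightarrow> nat \<Rightarrow> nat \<Rightarrow> bool) \<Rightarrow> ('w \<Rightarrow> seqn \<Rightarrow> real) \<Rightarrow> bool" where
  "S1 M th ell alpha phi \<longleftrightarrow>
     (\<integral>\<^sup>+ w. e2ennreal (elog (SUP x \<in> Xfib th ell alpha (th w). Lop th ell alpha phi w 1 x)) \<partial>M) < \<infinity>"

definition S2 :: "'w measure \<Rightarrow> ('w \<Rightarrow> 'w) \<Rightarrow> ('w \<Rightarrow> enat) \<Rightarrow> ('w \<Rightarrow> nat \<Rightarrow> nat \<Rightarrow> bool) \<Rightarrow> ('w \<Rightarrow> seqn \<Rightarrow> real) \<Rightarrow> bool" where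
  "S2 M th ell alpha phi \<longleftrightarrow>
     (\<integral>\<^sup>+ w. e2ennreal (- elog (INF x \<in> Xfib th ell alpha (th w). Lop th ell alpha phi w 1 x)) \<partial>M) < \<infinity>"

definition topmix :: "'w measure \<Rightarrow> ('w \<Rightarrow> 'w) \<Rightarrow> ('w \<Rightarrow> enat) \<Rightarrow> ('w \<Rightarrow> nat \<Rightarrow> nat \<Rightarrow> bool) \<Rightarrow> bool" where
  "topmix M th ell alpha \<longleftrightarrow>
     (\<forall>a b. [a] \<in> Wn M th ell alpha 1 \<and> [b] \<in> Wn M th ell alpha 1 \<longrightarrow>
        (\<exists>N :: 'w \<Rightarrow> nat. N \<in> measurable M (count_space UNIV) \<and>
          (AE w in M. \<forall>n. w \<in> Omega_w M th ell alpha [a] \<and> N w \<le> n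
              \<and> (th ^^ n) w \<in> Omega_w M th ell alpha [b] \<longrightarrow>
             cyl th ell alpha w [a] \<inter> {x. shiftn n x \<in> cyl th ell alpha ((th ^^ n) w) [b]} \<noteq> {})))"

definition Pser :: "('w \<Rightarrow> 'w) \<Rightarrow> ('w \<Rightarrow> enat) \<Rightarrow> ('w \<Rightarrow> nat \<Rightarrow> nat \<Rightarrow> bool) \<Rightarrow> ('w \<Rightarrow> seqn \<Rightarrow> real)
      \<Rightarrow> 'w set \<Rightarrow> ('w \<Rightarrow> seqn) \<Rightarrow> 'w \<Rightarrow> real \<Rightarrow> ennreal" where
  "Pser th ell alpha phi Ot xi w s =
     (\<Sum>n. if (th ^^ n) w \<in> Ot then ennreal (s ^ n) * Lop th ell alpha phi w n (xi ((th ^^ n) w)) else 0)"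

text \<open>Divergence type, with the relative Gurevic pressure P_G represented by the real PG:
  the series P_w(s) is finite for s < exp(-PG) and infinite at s = exp(-PG).\<close>
definition divergence_type :: "'w measure \<Rightarrow> ('w \<Rightarrow> 'w) \<Rightarrow> ('w \<Rightarrow> enat) \<Rightarrow> ('w \<Rightarrow> nat \<Rightarrow> nat \<Rightarrow> bool)
      \<Rightarrow> ('w \<Rightarrow> seqn \<Rightarrow> real) \<Rightarrow> real \<Rightarrow> nat \<Rightarrow> ('w \<Rightarrow> seqn) \<Rightarrow> 'w set \<Rightarrow> bool" where
  "divergence_type M th ell alpha phi PG a xi Ot \<longleftrightarrow>
     [a] \<in> Wn M th ell alpha 1 \<and> xi \<in> measurable M SeqM
     \<and> (AE w in M. xi w \<in> Xfib th ell alpha w)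
     \<and> (AE w in M. w \<in> Omega_w M th ell alpha [a] \<longrightarrow> xi w \<in> cyl th ell alpha w [a])
     \<and> Ot \<in> sets M \<and> Ot \<subseteq> Omega_w M th ell alpha [a] \<and> measure M Ot > 0
     \<and> (AE w in M. (\<forall>s. 0 \<le> s \<and> s < exp (- PG) \<longrightarrow> Pser th ell alpha phi Ot xi w s < \<infinity>)
                   \<and> Pser th ell alpha phi Ot xi w (exp (- PG)) = \<infinity>)"

definition lambda_limit :: "'w measure \<Rightarrow> ('w \<Rightarrow> 'w) \<Rightarrow> ('w \<Rightarrow> enat) \<Rightarrow> ('w \<Rightarrow> nat \<Rightarrow> nat \<Rightarrow> bool)
      \<Rightarrow> ('w \<Rightarrow> seqn \<Rightarrow> real) \<Rightarrow> real \<Rightarrow> 'w set \<Rightarrow> ('w \<Rightarrow> seqn) \<Rightarrow> ('w \<Rightarrow> real) \<Rightarrow> bool" where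
  "lambda_limit M th ell alpha phi PG Ot xi lam \<longleftrightarrow>
     (\<exists>s :: nat \<Rightarrow> real. incseq s \<and> (\<forall>k. 0 < s k \<and> s k < exp (- PG)) \<and> s \<longlonglongrightarrow> exp (- PG)
        \<and> (AE w in M. 0 < lam w \<and>
             (\<lambda>k. enn2real (Pser th ell alpha phi Ot xi w (s k))
                  / enn2real (Pser th ell alpha phi Ot xi (th w) (s k))) \<longlonglongrightarrow> lam w))"

definition conformal :: "'w measure \<Rightarrow> ('w \<Rightarrow> 'w) \<Rightarrow> ('w \<Rightarrow> enat) \<Rightarrow> ('w \<Rightarrow> nat \<Rightarrow> nat \<Rightarrow> bool)
      \<Rightarrow> ('w \<Rightarrow> seqn \<Rightarrow> real) \<Rightarrow> real \<Rightarrow> ('w \<Rightarrow> real) \<Rightarrow> ('w \<Rightarrow> seqn measure) \<Rightarrow> bool" where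
  "conformal M th ell alpha phi PG lam mu \<longleftrightarrow>
     (AE w in M. prob_space (mu w) \<and> sets (mu w) = sets (restrict_space SeqM (Xfib th ell alpha w))
        \<and> (\<forall>n. \<forall>v \<in> words th ell alpha w n. measure (mu w) (cyl th ell alpha w v) > 0)
        \<and> (\<forall>c E. [c] \<in> words th ell alpha w 1 \<longrightarrow> E \<in> sets (mu w) \<longrightarrow> E \<subseteq> cyl th ell alpha w [c] \<longrightarrow>
              emeasure (mu (th w)) (shiftn 1 ` E)
                = ennreal (lam w) * (\<integral>\<^sup>+ x \<in> E. ennreal (exp (PG - phi w x)) \<partial>mu w)))"

definition Lam :: "('w \<Rightarrow> 'w) \<Rightarrow> ('w \<Rightarrow> real) \<Rightarrow> 'w \<Rightarrow> nat \<Rightarrow> real" where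
  "Lam th lam w n = (\<Prod>k<n. lam ((th ^^ k) w))"

definition big_image :: "'w measure \<Rightarrow> ('w \<Rightarrow> 'w) \<Rightarrow> ('w \<Rightarrow> enat) \<Rightarrow> ('w \<Rightarrow> nat \<Rightarrow> nat \<Rightarrow> bool)
      \<Rightarrow> 'w set \<Rightarrow> ('w \<Rightarrow> nat set) \<Rightarrow> bool" where
  "big_image M th ell alpha Obi I \<longleftrightarrow>
     Obi \<in> sets M \<and> measure M Obi > 0 \<and>
     (\<forall>w \<in> Obi. finite (I w) \<and> (\<forall>b \<in> I w. [b] \<in> words th ell alpha w 1)
        \<and> (\<forall>c. [c] \<in> words th ell alpha (thinv M th w) 1 \<longrightarrow>
               (\<exists>b \<in> I w. alpha (thinv M th w) c b)))"

definition Dfun :: "'w measure \<Rightarrow> ('w \<Rightarrow> 'w) \<Rightarrow> ('w \<Rightarrow> enat) \<Rightarrow> ('w \<Rightarrow> nat \<Rightarrow> nat \<Rightarrow> bool)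
      \<Rightarrow> ('w \<Rightarrow> seqn measure) \<Rightarrow> 'w \<Rightarrow> real" where
  "Dfun M th ell alpha mu w =
     Inf {measure (mu w) (shiftn 1 ` cyl th ell alpha (thinv M th w) [b]) | b.
            [b] \<in> words th ell alpha (thinv M th w) 1}"

end

theory Submission
  imports Defs
begin

(* For an admissible word v of length n at w and x in [v]_w write
     Q = mu_(th^n w)(T [v_(n-1)]) and G = Lambda_n(w) mu_w([v]_w) exp(n P_G - phi_n^w(x)).
   Conformality of mu applied to the single cylinder [v]_w, together with the Hoelder bound
   V_|v|(phi^w) <= kappa(w) r^|v|, shows that mu_(th w)(T[v]_w) equals
   lambda(w) exp(P_G - phi^w(x)) mu_w([v]_w) up to a factor exp(+-kappa(w) r^|v|).  Since
   T[v]_w = [v_1 ... v_(n-1)]_(th w), iterating along the orbit gives Q = G up to a factor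
   exp(+-E), where E = sum_(j<n) kappa(th^(n-1-j) w) r^(j+1) is a partial sum of the series
   defining log B_(th^n w); this is the first assertion, Q / B <= G <= B Q.  Under the big
   image property each T[c] contains a cylinder [b] with b in the finite set I_w, hence
   D_w >= min_b mu_w([b]) > 0, and D <= Q <= 1 turns the first assertion into the second. *)

lemma funpow_Suc_apply: "(th ^^ i) (th w) = (th ^^ Suc i) w"
  by (simp add: funpow_Suc_right del: funpow.simps)

lemma funpow_in_space: "th \<in> measurable M M \<Longrightarrow> w \<in> space M \<Longrightarrow> (th ^^ k) w \<in> space M"
  using measurable_space[OF measurable_compose_n[of th M k]] by blast

lemma th_thinv: "bij_betw th (space M) (space M) \<Longrightarrow> w \<in> space M \<Longrightarrow> th (thinv M th w) = w"
  unfolding thinv_def by (simp add: bij_betw_def f_inv_into_f)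

lemma thinv_th: "bij_betw th (space M) (space M) \<Longrightarrow> w \<in> space M \<Longrightarrow> thinv M th (th w) = w"
  unfolding thinv_def by (simp add: bij_betw_def inv_into_f_f)

(* Going j steps back from th^n w returns to th^(n-j) w; this identifies the terms of the
   series log B_(th^n w) with the distortion terms accumulated along the orbit segment. *)
lemma thinv_funpow:
  assumes bij: "bij_betw th (space M) (space M)" and th: "th \<in> measurable M M" and w: "w \<in> space M"
  shows "j \<le> n \<Longrightarrow> (thinv M th ^^ j) ((th ^^ n) w) = (th ^^ (n - j)) w"
proof (induction j)
  case (Suc j)
  have "n - j = Suc (n - Suc j)"
    using Suc.prems by simp
  then have "(thinv M th ^^ Suc j) ((th ^^ n) w) = thinv M th (th ((th ^^ (n - Suc j)) w))"
    using Suc by simp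
  also have "\<dots> = (th ^^ (n - Suc j)) w"
    by (rule thinv_th[OF bij funpow_in_space[OF th w]])
  finally show ?case .
qed simp

(* A property of almost every fibre holds along almost every whole orbit, because th preserves
   the base measure. *)
lemma AE_orbit:
  assumes th: "th \<in> measurable M M" and preserving: "distr M M th = M" and ae: "AE w in M. P w"
  shows "AE w in M. \<forall>k. P ((th ^^ k) w)"
proof -
  have "AE w in M. P ((th ^^ k) w)" for k
  proof (induction k)
    case (Suc k)
    have "AE w in distr M M th. P ((th ^^ k) w)" unfolding preserving by (rule Suc.IH)
    then have "AE w in M. P ((th ^^ k) (th w))" by (rule AE_distrD[OF th])
    then show ?case by (simp only: funpow_Suc_apply)
  qed (use ae in simp)
  then show ?thesis by (simp add: AE_all_countable)
qed

lemma shift_image: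
  assumes c: "enat c < ell w"
  shows "shiftn 1 ` {y \<in> Xfib th ell alpha w. y 0 = c \<and> R (shiftn 1 y)}
       = {z \<in> Xfib th ell alpha (th w). alpha w c (z 0) \<and> R z}"
proof
  show "shiftn 1 ` {y \<in> Xfib th ell alpha w. y 0 = c \<and> R (shiftn 1 y)}
       \<subseteq> {z \<in> Xfib th ell alpha (th w). alpha w c (z 0) \<and> R z}"
  proof (rule subsetI, elim imageE)
    fix z y assume y: "y \<in> {y \<in> Xfib th ell alpha w. y 0 = c \<and> R (shiftn 1 y)}" and z: "z = shiftn 1 y"
    have "\<forall>i. enat (y (Suc i)) < ell ((th ^^ i) (th w))
               \<and> alpha ((th ^^ i) (th w)) (y (Suc i)) (y (Suc (Suc i)))"
      using y unfolding Xfib_def funpow_Suc_apply by blast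
    moreover have "alpha w c (y 1)"
      using y unfolding Xfib_def by (auto dest: spec[of _ 0])
    ultimately show "z \<in> {z \<in> Xfib th ell alpha (th w). alpha w c (z 0) \<and> R z}"
      using y unfolding z by (simp add: Xfib_def shiftn_def)
  qed
next
  show "{z \<in> Xfib th ell alpha (th w). alpha w c (z 0) \<and> R z}
     \<subseteq> shiftn 1 ` {y \<in> Xfib th ell alpha w. y 0 = c \<and> R (shiftn 1 y)}"
  proof clarify
    fix z assume z: "z \<in> Xfib th ell alpha (th w)" "alpha w c (z 0)" "R z"
    define y where "y = (\<lambda>i. if i = 0 then c else z (i - 1))"
    have shift_y: "shiftn 1 y = z" by (auto simp: y_def shiftn_def)
    have "enat (y i) < ell ((th ^^ i) w) \<and> alpha ((th ^^ i) w) (y i) (y (Suc i))" for i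
      using c z(1,2) unfolding Xfib_def y_def by (cases i) (simp_all add: funpow_Suc_apply)
    then have "y \<in> Xfib th ell alpha w" unfolding Xfib_def by blast
    then show "z \<in> shiftn 1 ` {y \<in> Xfib th ell alpha w. y 0 = c \<and> R (shiftn 1 y)}"
      using shift_y z(3) by (intro image_eqI[of _ _ y]) (auto simp: y_def)
  qed
qed

lemma shift_cyl:
  assumes "enat c < ell w"
  shows "shiftn 1 ` cyl th ell alpha w (c # v)
       = {z \<in> Xfib th ell alpha (th w). alpha w c (z 0) \<and> (\<forall>i<length v. z i = v ! i)}"
proof -
  have "cyl th ell alpha w (c # v)
      = {y \<in> Xfib th ell alpha w. y 0 = c \<and> (\<lambda>z. \<forall>i<length v. z i = v ! i) (shiftn 1 y)}"
    unfolding cyl_def shiftn_def by (auto simp: All_less_Suc2)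
  then show ?thesis using shift_image[where R="\<lambda>z. \<forall>i<length v. z i = v ! i" and ell=ell and w=w and th=th and alpha=alpha, OF assms] by simp
qed

lemma words_Cons:
  assumes "c # v \<in> words th ell alpha w (Suc m)"
  shows "v \<in> words th ell alpha (th w) m" and "enat c < ell w"
    and "m > 0 \<Longrightarrow> alpha w c (v ! 0)"
proof -
  have len: "length v = m"
    and sym: "\<forall>i<Suc m. enat ((c # v) ! i) < ell ((th ^^ i) w)"
    and trans: "\<forall>i. Suc i < Suc m \<longrightarrow> alpha ((th ^^ i) w) ((c # v) ! i) ((c # v) ! Suc i)"
    using assms unfolding words_def by auto
  have "enat (v ! i) < ell ((th ^^ i) (th w))" if "i < m" for i
    using sym[rule_format, of "Suc i"] that by (simp add: funpow_Suc_apply)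
  moreover have "alpha ((th ^^ i) (th w)) (v ! i) (v ! Suc i)" if "Suc i < m" for i
    using trans[rule_format, of "Suc i"] that by (simp add: funpow_Suc_apply)
  ultimately show "v \<in> words th ell alpha (th w) m"
    using len unfolding words_def by blast
  show "enat c < ell w" using sym[rule_format, of 0] by simp
  show "m > 0 \<Longrightarrow> alpha w c (v ! 0)" using trans[rule_format, of 0] by simp
qed

lemma shift_cyl_Cons:
  assumes "c # v \<in> words th ell alpha w (Suc m)" and "m > 0"
  shows "shiftn 1 ` cyl th ell alpha w (c # v) = cyl th ell alpha (th w) v"
proof -
  have "alpha w c (v ! 0)" and len: "length v = m"
    using words_Cons(3)[OF assms] assms unfolding words_def by auto
  then show ?thesis
    using shift_cyl[where ell=ell and w=w and th=th and alpha=alpha and v=v, OF words_Cons(2)[OF assms(1)]] assms(2)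
    unfolding cyl_def by auto
qed

lemma shift_cyl_single:
  assumes "enat c < ell u"
  shows "shiftn 1 ` cyl th ell alpha u [c] = {z \<in> Xfib th ell alpha (th u). alpha u c (z 0)}"
  using shift_cyl[where v="[]" and ell=ell and w=u and th=th and alpha=alpha, OF assms] by simp

lemma space_SeqM: "space SeqM = UNIV"
  unfolding SeqM_def by (simp add: space_PiM)

lemma cyl_sets: "cyl th ell alpha w v \<in> sets (restrict_space SeqM (Xfib th ell alpha w))"
proof -
  have "{x \<in> space SeqM. \<forall>i<length v. x i = v ! i} \<in> sets SeqM"
    unfolding SeqM_def by measurable
  moreover have "cyl th ell alpha w v = Xfib th ell alpha w \<inter> {x \<in> space SeqM. \<forall>i<length v. x i = v ! i}"
    unfolding cyl_def space_SeqM by auto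
  ultimately show ?thesis unfolding sets_restrict_space by blast
qed

lemma first_symbol_sets:
  "{z \<in> Xfib th ell alpha w. P (z 0)} \<in> sets (restrict_space SeqM (Xfib th ell alpha w))"
proof -
  have "{z \<in> space SeqM. P (z 0)} \<in> sets SeqM"
    unfolding SeqM_def by measurable
  moreover have "{z \<in> Xfib th ell alpha w. P (z 0)} = Xfib th ell alpha w \<inter> {z \<in> space SeqM. P (z 0)}"
    unfolding space_SeqM by auto
  ultimately show ?thesis unfolding sets_restrict_space by blast
qed

lemma shiftn_shiftn: "shiftn k (shiftn (Suc 0) x) = shiftn (Suc k) x"
  by (auto simp: shiftn_def)

lemma phin_Suc: "phin phi th w (Suc m) x = phi w x + phin phi th (th w) m (shiftn 1 x)"
  unfolding phin_def sum.lessThan_Suc_shift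
  by (simp add: funpow_Suc_apply shiftn_shiftn shiftn_def[of 0] del: funpow.simps)

lemma Lam_Suc: "Lam th lam w (Suc n) = lam w * Lam th lam (th w) n"
  unfolding Lam_def prod.lessThan_Suc_shift by (simp only: funpow_Suc_apply funpow_0)

lemma Lam_nonneg:
  assumes "\<And>k. 0 < lam ((th ^^ k) w)"
  shows "0 \<le> Lam th lam w n"
  unfolding Lam_def using assms by (simp add: less_imp_le prod_nonneg)

lemma Var_le:
  assumes "x \<in> Xfib th ell alpha w" "y \<in> Xfib th ell alpha w" "\<forall>i<j. x i = y i"
    and "Var th ell alpha phi w j \<le> ereal K"
  shows "\<bar>phi w x - phi w y\<bar> \<le> K"
proof -
  have "ereal \<bar>phi w x - phi w y\<bar> \<le> Var th ell alpha phi w j"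
    unfolding Var_def using assms(1-3) by (intro SUP_upper2[of "(x, y)"]) auto
  then show ?thesis using assms(4) by (metis ereal_less_eq(3) order_trans)
qed

(* within_factor d A B: A and B agree up to a multiplicative factor exp(+-d).  Distortion
   estimates compose additively in d, which is how the errors along an orbit are collected. *)
definition within_factor :: "real \<Rightarrow> real \<Rightarrow> real \<Rightarrow> bool" where
  "within_factor d A B \<longleftrightarrow> A \<le> exp d * B \<and> B \<le> exp d * A"

lemma within_factor_trans:
  assumes "within_factor d A B" and "within_factor e B C"
  shows "within_factor (d + e) A C"
proof -
  have "A \<le> exp d * B" "B \<le> exp e * C" "C \<le> exp e * B" "B \<le> exp d * A"
    using assms unfolding within_factor_def by auto
  then have "A \<le> exp d * (exp e * C)" "C \<le> exp e * (exp d * A)"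
    by (smt (verit) exp_gt_zero mult_left_mono)+
  then show ?thesis unfolding within_factor_def by (simp add: exp_add mult_ac)
qed

lemma within_factor_scale:
  assumes "within_factor d A B" and "0 \<le> c"
  shows "within_factor d (c * A) (c * B)"
  using assms mult_left_mono[of _ _ c] unfolding within_factor_def
  by (metis mult.left_commute)

lemma within_factor_mono:
  assumes "within_factor d A B" and "d \<le> e" and "0 \<le> A" and "0 \<le> B"
  shows "within_factor e A B"
  using assms mult_right_mono[of "exp d" "exp e"] unfolding within_factor_def
  by (meson exp_le_cancel_iff order_trans)

lemma within_factor_exp_iff:
  "within_factor d A B \<longleftrightarrow> A / exp d \<le> B \<and> B \<le> exp d * A"
  unfolding within_factor_def by (simp add: pos_divide_le_eq mult.commute)

lemma conformal_distortion:
  fixes \<mu> :: "'a measure" and \<nu> :: "'b measure"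
  assumes S: "S \<in> sets \<mu>" "emeasure \<mu> S < \<infinity>" "x \<in> S"
    and osc: "\<forall>y\<in>S. \<bar>g y - g x\<bar> \<le> d" and l: "0 \<le> l"
    and conf: "emeasure \<nu> A = ennreal l * (\<integral>\<^sup>+ y \<in> S. ennreal (exp (g y)) \<partial>\<mu>)"
  shows "within_factor d (measure \<nu> A) (l * exp (g x) * measure \<mu> S)"
proof -
  let ?I = "\<integral>\<^sup>+ y \<in> S. ennreal (exp (g y)) \<partial>\<mu>"
  have \<mu>S: "emeasure \<mu> S = ennreal (measure \<mu> S)"
    using S(2) by (simp add: emeasure_eq_ennreal_measure)
  have const_integral: "(\<integral>\<^sup>+ y. ennreal c * indicator S y \<partial>\<mu>) = ennreal (c * measure \<mu> S)"
    if "0 \<le> c" for c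
    using S(1) that by (simp add: nn_integral_cmult_indicator \<mu>S ennreal_mult)
  have "?I \<le> (\<integral>\<^sup>+ y. ennreal (exp (g x + d)) * indicator S y \<partial>\<mu>)"
    using osc by (intro nn_integral_mono) (auto simp: indicator_def intro!: ennreal_leI)
  then have upper: "?I \<le> ennreal (exp (g x + d) * measure \<mu> S)"
    by (simp add: const_integral)
  have "(\<integral>\<^sup>+ y. ennreal (exp (g x - d)) * indicator S y \<partial>\<mu>) \<le> ?I"
    using osc by (intro nn_integral_mono) (auto simp: indicator_def abs_le_iff intro!: ennreal_leI)
  then have lower: "ennreal (exp (g x - d) * measure \<mu> S) \<le> ?I"
    by (simp add: const_integral)
  define i where "i = enn2real ?I"
  have "?I < \<infinity>"
    using upper by (simp add: order.strict_trans1)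
  then have I: "?I = ennreal i" and i0: "0 \<le> i"
    by (simp_all add: i_def)
  have i_upper: "i \<le> exp (g x + d) * measure \<mu> S" and i_lower: "exp (g x - d) * measure \<mu> S \<le> i"
    using upper lower i0 by (auto simp: I ennreal_le_iff)
  have "measure \<nu> A = l * i"
    using conf l i0 by (simp add: I measure_def ennreal_mult[symmetric])
  moreover have "l * i \<le> exp d * (l * exp (g x) * measure \<mu> S)"
    using mult_left_mono[OF i_upper l] by (simp add: exp_add mult_ac)
  moreover have "l * exp (g x) * measure \<mu> S \<le> exp d * (l * i)"
    using mult_left_mono[OF i_lower, of "exp d * l"] l by (simp add: exp_diff mult_ac)
  ultimately show ?thesis unfolding within_factor_def by simp
qed

definition regular_fibre :: "'w measure \<Rightarrow> ('w \<Rightarrow> 'w) \<Rightarrow> ('w \<Rightarrow> enat) \<Rightarrow> ('w \<Rightarrow> nat \<Rightarrow> nat \<Rightarrow> bool)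
      \<Rightarrow> ('w \<Rightarrow> seqn \<Rightarrow> real) \<Rightarrow> real \<Rightarrow> ('w \<Rightarrow> real) \<Rightarrow> ('w \<Rightarrow> seqn measure) \<Rightarrow> ('w \<Rightarrow> real) \<Rightarrow> real
      \<Rightarrow> 'w \<Rightarrow> bool" where
  "regular_fibre M th ell alpha phi PG lam mu kappa r w \<longleftrightarrow>
     prob_space (mu w) \<and> sets (mu w) = sets (restrict_space SeqM (Xfib th ell alpha w))
     \<and> (\<forall>n. \<forall>v \<in> words th ell alpha w n. measure (mu w) (cyl th ell alpha w v) > 0)
     \<and> (\<forall>c E. [c] \<in> words th ell alpha w 1 \<longrightarrow> E \<in> sets (mu w) \<longrightarrow> E \<subseteq> cyl th ell alpha w [c] \<longrightarrow>
           emeasure (mu (th w)) (shiftn 1 ` E)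
             = ennreal (lam w) * (\<integral>\<^sup>+ x \<in> E. ennreal (exp (PG - phi w x)) \<partial>mu w))
     \<and> 0 < lam w
     \<and> (\<forall>j \<ge> 1. Var th ell alpha phi w j \<le> ereal (kappa w * r ^ j))
     \<and> logB M th kappa r w \<noteq> \<infinity>"

lemma regular_fibreD:
  assumes "regular_fibre M th ell alpha phi PG lam mu kappa r w"
  shows "prob_space (mu w)"
    and "sets (mu w) = sets (restrict_space SeqM (Xfib th ell alpha w))"
    and "v \<in> words th ell alpha w n \<Longrightarrow> measure (mu w) (cyl th ell alpha w v) > 0"
    and "[c] \<in> words th ell alpha w 1 \<Longrightarrow> E \<in> sets (mu w) \<Longrightarrow> E \<subseteq> cyl th ell alpha w [c] \<Longrightarrow>
           emeasure (mu (th w)) (shiftn 1 ` E)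
             = ennreal (lam w) * (\<integral>\<^sup>+ x \<in> E. ennreal (exp (PG - phi w x)) \<partial>mu w)"
    and "0 < lam w"
    and "1 \<le> j \<Longrightarrow> Var th ell alpha phi w j \<le> ereal (kappa w * r ^ j)"
    and "logB M th kappa r w \<noteq> \<infinity>"
  using assms unfolding regular_fibre_def by simp_all

(* log B is measurable, so its finite integral forces it to be finite almost surely. *)
lemma logB_measurable:
  assumes "thinv M th \<in> measurable M M" and "kappa \<in> borel_measurable M"
  shows "logB M th kappa r \<in> borel_measurable M"
proof -
  have "(\<lambda>w. ennreal (kappa ((thinv M th ^^ Suc j) w) * r ^ Suc j)) \<in> borel_measurable M" for j
    using measurable_compose[OF measurable_compose_n[OF assms(1)] assms(2)] by measurable
  then show ?thesis unfolding logB_def[abs_def] by measurable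
qed

lemma H1_constants:
  assumes "H1 M th ell alpha phi kappa r"
  shows "0 < r" and "\<forall>u \<in> space M. 1 \<le> kappa u"
  using assms unfolding H1_def holder_def by blast+

(* Almost every fibre is regular: conformality, positivity of lambda and the Hoelder bound hold
   almost surely by hypothesis, and log B is finite almost surely by (H1). *)
lemma regular_fibre_AE:
  assumes thinv: "thinv M th \<in> measurable M M"
    and lam: "lambda_limit M th ell alpha phi PG Ot xi lam"
    and conf: "conformal M th ell alpha phi PG lam mu"
    and H1: "H1 M th ell alpha phi kappa r"
  shows "AE w in M. regular_fibre M th ell alpha phi PG lam mu kappa r w"
proof -
  have lam_pos: "AE w in M. 0 < lam w"
    using lam unfolding lambda_limit_def by (auto elim: AE_mp)
  have var: "AE w in M. \<forall>j \<ge> 1. Var th ell alpha phi w j \<le> ereal (kappa w * r ^ j)"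
    and kappa: "kappa \<in> borel_measurable M"
    and integral: "(\<integral>\<^sup>+ w. logB M th kappa r w \<partial>M) < \<infinity>"
    using H1 unfolding H1_def holder_def by simp_all
  have "AE w in M. logB M th kappa r w \<noteq> \<infinity>"
    using nn_integral_PInf_AE[OF logB_measurable[OF thinv kappa]] integral by simp
  then show ?thesis
    using conf lam_pos var unfolding conformal_def
    by eventually_elim (simp add: regular_fibre_def)
qed

lemma cylinder_step:
  assumes reg: "regular_fibre M th ell alpha phi PG lam mu kappa r w"
    and v: "v \<in> words th ell alpha w (Suc m)" and x: "x \<in> cyl th ell alpha w v"
  shows "within_factor (kappa w * r ^ Suc m)
           (measure (mu (th w)) (shiftn 1 ` cyl th ell alpha w v))
           (lam w * exp (PG - phi w x) * measure (mu w) (cyl th ell alpha w v))"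
proof -
  let ?S = "cyl th ell alpha w v"
  interpret prob_space "mu w" by (rule regular_fibreD(1)[OF reg])
  obtain c v' where v_eq: "v = c # v'"
    using v unfolding words_def by (cases v) auto
  have S: "?S \<in> sets (mu w)"
    unfolding regular_fibreD(2)[OF reg] by (rule cyl_sets)
  have c: "[c] \<in> words th ell alpha w 1"
    using words_Cons(2)[of c v' th ell alpha w m] v unfolding v_eq by (simp add: words_def)
  have sub: "?S \<subseteq> cyl th ell alpha w [c]"
    unfolding v_eq cyl_def by auto
  have conf: "emeasure (mu (th w)) (shiftn 1 ` ?S)
      = ennreal (lam w) * (\<integral>\<^sup>+ y \<in> ?S. ennreal (exp (PG - phi w y)) \<partial>mu w)"
    by (rule regular_fibreD(4)[OF reg c S sub])
  have len: "length v = Suc m" using v unfolding words_def by simp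
  have osc: "\<bar>(PG - phi w y) - (PG - phi w x)\<bar> \<le> kappa w * r ^ Suc m" if y: "y \<in> ?S" for y
  proof -
    have "\<bar>phi w x - phi w y\<bar> \<le> kappa w * r ^ Suc m"
      using x y len regular_fibreD(6)[OF reg, of "Suc m"] unfolding cyl_def
      by (intro Var_le[where j="Suc m"]) auto
    then show ?thesis by simp
  qed
  have lam: "0 \<le> lam w" using regular_fibreD(5)[OF reg] by simp
  have fin: "emeasure (mu w) ?S < \<infinity>" using emeasure_finite by (simp add: less_top[symmetric])
  show ?thesis
    by (rule conformal_distortion[OF S fin x _ lam conf]) (use osc in blast)
qed

definition distortion_sum :: "('w \<Rightarrow> 'w) \<Rightarrow> ('w \<Rightarrow> real) \<Rightarrow> real \<Rightarrow> 'w \<Rightarrow> nat \<Rightarrow> real" where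
  "distortion_sum th kappa r w n = (\<Sum>j<n. kappa ((th ^^ (n - 1 - j)) w) * r ^ Suc j)"

lemma distortion_sum_Suc:
  "distortion_sum th kappa r w (Suc n) = distortion_sum th kappa r (th w) n + kappa w * r ^ Suc n"
proof -
  have "kappa ((th ^^ (Suc n - 1 - j)) w) = kappa ((th ^^ (n - 1 - j)) (th w))" if "j < n" for j
    using that by (simp add: funpow_Suc_apply Suc_diff_Suc)
  then show ?thesis
    unfolding distortion_sum_def by (simp add: sum.lessThan_Suc)
qed

lemma orbit_distortion:
  assumes "\<forall>k. regular_fibre M th ell alpha phi PG lam mu kappa r ((th ^^ k) w)"
    and "v \<in> words th ell alpha w (Suc m)" and "x \<in> cyl th ell alpha w v"
  shows "within_factor (distortion_sum th kappa r w (Suc m))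
           (measure (mu ((th ^^ Suc m) w)) (shiftn 1 ` cyl th ell alpha ((th ^^ m) w) [v ! m]))
           (Lam th lam w (Suc m) * measure (mu w) (cyl th ell alpha w v)
              * exp (real (Suc m) * PG - phin phi th w (Suc m) x))"
  using assms
proof (induction m arbitrary: w v x)
  case 0
  obtain c where v_eq: "v = [c]"
    using 0 unfolding words_def by (cases v) auto
  have "regular_fibre M th ell alpha phi PG lam mu kappa r w"
    using 0 by (metis funpow_0)
  from cylinder_step[OF this 0(2,3)] show ?case
    unfolding v_eq by (simp add: distortion_sum_def Lam_def phin_def shiftn_def[of 0] mult_ac)
next
  case (Suc m)
  obtain c v' where v_eq: "v = c # v'"
    using Suc.prems(2) unfolding words_def by (cases v) auto
  have v': "v' \<in> words th ell alpha (th w) (Suc m)"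
    using Suc.prems(2) unfolding v_eq by (rule words_Cons(1))
  have image: "shiftn 1 ` cyl th ell alpha w v = cyl th ell alpha (th w) v'"
    using Suc.prems(2) unfolding v_eq by (intro shift_cyl_Cons) auto
  have x': "shiftn 1 x \<in> cyl th ell alpha (th w) v'"
    using Suc.prems(3) image by blast
  have reg': "regular_fibre M th ell alpha phi PG lam mu kappa r ((th ^^ k) (th w))" for k
    using Suc.prems(1) unfolding funpow_Suc_apply by blast
  define C where "C = Lam th lam (th w) (Suc m)
                        * exp (real (Suc m) * PG - phin phi th (th w) (Suc m) (shiftn 1 x))"
  have "0 \<le> C"
    unfolding C_def using Lam_nonneg[of lam th "th w"] regular_fibreD(5)[OF reg'] by simp
  have IH: "within_factor (distortion_sum th kappa r (th w) (Suc m))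
      (measure (mu ((th ^^ Suc (Suc m)) w)) (shiftn 1 ` cyl th ell alpha ((th ^^ Suc m) w) [v ! Suc m]))
      (C * measure (mu (th w)) (cyl th ell alpha (th w) v'))"
    using Suc.IH[OF allI[OF reg'] v' x'] unfolding C_def v_eq by (simp add: funpow_Suc_apply mult_ac)
  have step: "within_factor (kappa w * r ^ Suc (Suc m))
      (measure (mu (th w)) (cyl th ell alpha (th w) v'))
      (lam w * exp (PG - phi w x) * measure (mu w) (cyl th ell alpha w v))"
    using cylinder_step[OF _ Suc.prems(2,3)] Suc.prems(1) unfolding image by (metis funpow_0)
  have exp_split: "exp (real (Suc (Suc m)) * PG - phin phi th w (Suc (Suc m)) x)
      = exp (PG - phi w x) * exp (real (Suc m) * PG - phin phi th (th w) (Suc m) (shiftn 1 x))"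
    unfolding phin_Suc[of phi th w "Suc m"] exp_add[symmetric] by (simp add: algebra_simps)
  have "C * (lam w * exp (PG - phi w x) * measure (mu w) (cyl th ell alpha w v))
      = Lam th lam w (Suc (Suc m)) * measure (mu w) (cyl th ell alpha w v)
          * exp (real (Suc (Suc m)) * PG - phin phi th w (Suc (Suc m)) x)"
    unfolding exp_split C_def Lam_Suc[of th lam w "Suc m"] by (simp only: mult_ac)
  then show ?case
    using within_factor_trans[OF IH within_factor_scale[OF step \<open>0 \<le> C\<close>]]
    by (simp only: distortion_sum_Suc[of th kappa r w "Suc m"])
qed

(* The accumulated distortion is a partial sum of the series defining log B_(th^n w). *)
lemma distortion_sum_le_logB:
  assumes bij: "bij_betw th (space M) (space M)" and th: "th \<in> measurable M M" and w: "w \<in> space M"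
    and kappa: "\<forall>u \<in> space M. 1 \<le> kappa u" and r: "0 < r"
    and fin: "logB M th kappa r ((th ^^ n) w) \<noteq> \<infinity>"
  shows "distortion_sum th kappa r w n \<le> enn2real (logB M th kappa r ((th ^^ n) w))"
proof -
  have term_nonneg: "0 \<le> kappa ((th ^^ k) w) * r ^ Suc j" for k j
    using kappa funpow_in_space[OF th w, of k] r by (intro mult_nonneg_nonneg) auto
  have backward: "(th ^^ (n - 1 - j)) w = (thinv M th ^^ Suc j) ((th ^^ n) w)" if "j < n" for j
    using thinv_funpow[OF bij th w, of "Suc j" n] that by simp
  have "ennreal (distortion_sum th kappa r w n) = (\<Sum>j<n. ennreal (kappa ((th ^^ (n - 1 - j)) w) * r ^ Suc j))"
    unfolding distortion_sum_def using term_nonneg by (rule sum_ennreal[symmetric])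
  also have "\<dots> = (\<Sum>j<n. ennreal (kappa ((thinv M th ^^ Suc j) ((th ^^ n) w)) * r ^ Suc j))"
    using backward by (intro sum.cong) auto
  also have "\<dots> \<le> logB M th kappa r ((th ^^ n) w)"
    unfolding logB_def by (rule sum_le_suminf) auto
  finally have "ennreal (distortion_sum th kappa r w n) \<le> logB M th kappa r ((th ^^ n) w)" .
  moreover have "0 \<le> distortion_sum th kappa r w n"
    unfolding distortion_sum_def using term_nonneg by (simp add: sum_nonneg)
  ultimately show ?thesis
    using fin enn2real_mono[of "ennreal (distortion_sum th kappa r w n)"]
    by (simp add: less_top)
qed

lemma cylinder_gibbs_bounds:
  assumes H1: "H1 M th ell alpha phi kappa r"
    and bij: "bij_betw th (space M) (space M)" and th: "th \<in> measurable M M" and w: "w \<in> space M"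
    and reg: "\<forall>k. regular_fibre M th ell alpha phi PG lam mu kappa r ((th ^^ k) w)"
  shows "\<forall>n \<ge> 1. \<forall>v \<in> words th ell alpha w n. \<forall>x \<in> cyl th ell alpha w v.
        measure (mu ((th ^^ n) w)) (shiftn 1 ` cyl th ell alpha ((th ^^ (n - 1)) w) [v ! (n - 1)])
          / Bfun M th kappa r ((th ^^ n) w)
        \<le> Lam th lam w n * measure (mu w) (cyl th ell alpha w v) / exp (phin phi th w n x - real n * PG)
      \<and> Lam th lam w n * measure (mu w) (cyl th ell alpha w v) / exp (phin phi th w n x - real n * PG)
        \<le> Bfun M th kappa r ((th ^^ n) w)
          * measure (mu ((th ^^ n) w)) (shiftn 1 ` cyl th ell alpha ((th ^^ (n - 1)) w) [v ! (n - 1)])"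
proof (intro allI impI ballI)
  fix n v x assume "1 \<le> n" and v: "v \<in> words th ell alpha w n" and x: "x \<in> cyl th ell alpha w v"
  then obtain m where n: "n = Suc m" by (cases n) auto
  let ?Q = "measure (mu ((th ^^ n) w)) (shiftn 1 ` cyl th ell alpha ((th ^^ (n - 1)) w) [v ! (n - 1)])"
  let ?G = "Lam th lam w n * measure (mu w) (cyl th ell alpha w v) / exp (phin phi th w n x - real n * PG)"
  let ?logB = "enn2real (logB M th kappa r ((th ^^ n) w))"
  have G_eq: "?G = Lam th lam w n * measure (mu w) (cyl th ell alpha w v) * exp (real n * PG - phin phi th w n x)"
    unfolding divide_inverse exp_minus[symmetric] by simp
  have close: "within_factor (distortion_sum th kappa r w n) ?Q ?G"
    using orbit_distortion[OF reg v[unfolded n] x] unfolding G_eq unfolding n diff_Suc_1 .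
  have le_logB: "distortion_sum th kappa r w n \<le> ?logB"
    by (rule distortion_sum_le_logB[OF bij th w H1_constants(2)[OF H1] H1_constants(1)[OF H1]
          regular_fibreD(7)[OF reg[rule_format, of n]]])
  have "0 \<le> Lam th lam w n"
    using regular_fibreD(5)[OF reg[rule_format]] by (rule Lam_nonneg)
  then have "0 \<le> ?G" by simp
  then have "within_factor ?logB ?Q ?G"
    by (rule within_factor_mono[OF close le_logB measure_nonneg])
  then show "?Q / Bfun M th kappa r ((th ^^ n) w) \<le> ?G \<and> ?G \<le> Bfun M th kappa r ((th ^^ n) w) * ?Q"
    unfolding Bfun_def within_factor_exp_iff .
qed

(* Big image property: every set T[c] contains one of the finitely many cylinders [b], b in I_w,
   so D_w is bounded below by the smallest of their (positive) measures. *)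
lemma Dfun_pos:
  assumes reg: "regular_fibre M th ell alpha phi PG lam mu kappa r w"
    and big_image: "big_image M th ell alpha Obi I" and w: "w \<in> Obi"
    and th_u: "th (thinv M th w) = w" and ell_u: "0 < ell (thinv M th w)"
  shows "0 < Dfun M th ell alpha mu w"
proof -
  have fin: "finite (I w)" and symbols: "\<forall>b \<in> I w. [b] \<in> words th ell alpha w 1"
    and cover: "\<forall>c. [c] \<in> words th ell alpha (thinv M th w) 1 \<longrightarrow> (\<exists>b \<in> I w. alpha (thinv M th w) c b)"
    using big_image w unfolding big_image_def by auto
  interpret prob_space "mu w" by (rule regular_fibreD(1)[OF reg])
  let ?u = "thinv M th w"
  let ?m = "Min ((\<lambda>b. measure (mu w) (cyl th ell alpha w [b])) ` I w)"
  have zero_word: "[0] \<in> words th ell alpha ?u 1"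
    using ell_u unfolding words_def by (simp add: zero_enat_def)
  then have "I w \<noteq> {}" using cover by blast
  then have "0 < ?m"
    using fin symbols regular_fibreD(3)[OF reg] by auto
  moreover have "?m \<le> Dfun M th ell alpha mu w"
    unfolding Dfun_def
  proof (rule cInf_greatest)
    fix y assume "y \<in> {measure (mu w) (shiftn 1 ` cyl th ell alpha ?u [c]) | c. [c] \<in> words th ell alpha ?u 1}"
    then obtain c where y: "y = measure (mu w) (shiftn 1 ` cyl th ell alpha ?u [c])"
      and c: "[c] \<in> words th ell alpha ?u 1" by blast
    obtain b where b: "b \<in> I w" and "alpha ?u c b" using cover c by blast
    have image: "shiftn 1 ` cyl th ell alpha ?u [c] = {z \<in> Xfib th ell alpha w. alpha ?u c (z 0)}"
      using shift_cyl_single[of c ell ?u th alpha] c th_u unfolding words_def by simp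
    have "cyl th ell alpha w [b] \<subseteq> {z \<in> Xfib th ell alpha w. alpha ?u c (z 0)}"
      using \<open>alpha ?u c b\<close> by (auto simp: cyl_def)
    moreover have "{z \<in> Xfib th ell alpha w. alpha ?u c (z 0)} \<in> sets (mu w)"
      unfolding regular_fibreD(2)[OF reg] by (rule first_symbol_sets)
    ultimately have "measure (mu w) (cyl th ell alpha w [b]) \<le> y"
      unfolding y image by (rule finite_measure_mono)
    moreover have "?m \<le> measure (mu w) (cyl th ell alpha w [b])" using fin b by simp
    ultimately show "?m \<le> y" by simp
  qed (use zero_word in blast)
  ultimately show ?thesis by simp
qed

lemma Dfun_le_image_measure:
  assumes bij: "bij_betw th (space M) (space M)" and th: "th \<in> measurable M M" and w: "w \<in> space M"
    and n: "1 \<le> n" and v: "v \<in> words th ell alpha w n"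
  shows "Dfun M th ell alpha mu ((th ^^ n) w)
     \<le> measure (mu ((th ^^ n) w)) (shiftn 1 ` cyl th ell alpha ((th ^^ (n - 1)) w) [v ! (n - 1)])"
proof -
  have u: "thinv M th ((th ^^ n) w) = (th ^^ (n - 1)) w"
    using thinv_funpow[OF bij th w, of 1 n] n by simp
  have "[v ! (n - 1)] \<in> words th ell alpha ((th ^^ (n - 1)) w) 1"
    using v n unfolding words_def by auto
  then show ?thesis
    unfolding Dfun_def u by (intro cInf_lower) (auto intro!: bdd_belowI[where m=0])
qed

(* Second pair of bounds on a regular orbit, from D_(th^n w) <= mu(T[v_(n-1)]) <= 1. *)
lemma cylinder_gibbs_bounds_Dfun:
  assumes H1: "H1 M th ell alpha phi kappa r"
    and bij: "bij_betw th (space M) (space M)" and th: "th \<in> measurable M M" and w: "w \<in> space M"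
    and reg: "\<forall>k. regular_fibre M th ell alpha phi PG lam mu kappa r ((th ^^ k) w)"
  shows "\<forall>n \<ge> 1. \<forall>v \<in> words th ell alpha w n. \<forall>x \<in> cyl th ell alpha w v.
           Dfun M th ell alpha mu ((th ^^ n) w) / Bfun M th kappa r ((th ^^ n) w)
           \<le> Lam th lam w n * measure (mu w) (cyl th ell alpha w v) / exp (phin phi th w n x - real n * PG)
         \<and> Lam th lam w n * measure (mu w) (cyl th ell alpha w v) / exp (phin phi th w n x - real n * PG)
           \<le> Bfun M th kappa r ((th ^^ n) w)"
proof (intro allI impI ballI)
  fix n v x assume n: "1 \<le> n" and v: "v \<in> words th ell alpha w n" and x: "x \<in> cyl th ell alpha w v"
  let ?Q = "measure (mu ((th ^^ n) w)) (shiftn 1 ` cyl th ell alpha ((th ^^ (n - 1)) w) [v ! (n - 1)])"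
  let ?B = "Bfun M th kappa r ((th ^^ n) w)"
  let ?G = "Lam th lam w n * measure (mu w) (cyl th ell alpha w v) / exp (phin phi th w n x - real n * PG)"
  have bounds: "?Q / ?B \<le> ?G" "?G \<le> ?B * ?Q"
    using cylinder_gibbs_bounds[OF H1 bij th w reg] n v x by blast+
  have B_pos: "0 < ?B" unfolding Bfun_def by simp
  have "Dfun M th ell alpha mu ((th ^^ n) w) \<le> ?Q"
    by (rule Dfun_le_image_measure[OF bij th w n v])
  then have "Dfun M th ell alpha mu ((th ^^ n) w) / ?B \<le> ?Q / ?B"
    using B_pos by (simp add: divide_right_mono)
  moreover have "?Q \<le> 1"
    using regular_fibreD(1)[OF reg[rule_format, of n]] by (rule prob_space.prob_le_1)
  then have "?B * ?Q \<le> ?B" using B_pos by (simp add: mult_left_le)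
  ultimately show "Dfun M th ell alpha mu ((th ^^ n) w) / ?B \<le> ?G \<and> ?G \<le> ?B" 
    using bounds by linarith
qed

theorem mainTheorem11:
  fixes M :: "'w measure" and th :: "'w \<Rightarrow> 'w" and ell :: "'w \<Rightarrow> enat"
    and alpha :: "'w \<Rightarrow> nat \<Rightarrow> nat \<Rightarrow> bool" and phi :: "'w \<Rightarrow> seqn \<Rightarrow> real"
    and PG :: real and kappa :: "'w \<Rightarrow> real" and r :: real
    and a :: nat and xi :: "'w \<Rightarrow> seqn" and Ot :: "'w set"
    and lam :: "'w \<Rightarrow> real" and mu :: "'w \<Rightarrow> seqn measure"
  assumes "prob_space M"
    and "th \<in> measurable M M" and "bij_betw th (space M) (space M)"
    and "thinv M th \<in> measurable M M" and "distr M M th = M" and "ergodic_map M th"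
    and "ell \<in> measurable M (count_space UNIV)" and "\<forall>w \<in> space M. 1 < ell w"
    and "\<forall>i j. {w \<in> space M. alpha w i j} \<in> sets M"
    and "AE w in M. \<forall>i. enat i < ell w \<longrightarrow> (\<exists>j. enat j < ell (th w) \<and> alpha w i j)"
    and "(\<lambda>(w, x). if x \<in> Xfib th ell alpha w then phi w x else 0) \<in> borel_measurable (M \<Otimes>\<^sub>M SeqM)"
    and "topmix M th ell alpha"
    and "H2 M th ell alpha phi" and "S1 M th ell alpha phi" and "S2 M th ell alpha phi"
    and "divergence_type M th ell alpha phi PG a xi Ot"
    and "lambda_limit M th ell alpha phi PG Ot xi lam"
    and "conformal M th ell alpha phi PG lam mu"
    and "H1 M th ell alpha phi kappa r"
  shows
    "(AE w in M. \<forall>n \<ge> 1. \<forall>v \<in> words th ell alpha w n. \<forall>x \<in> cyl th ell alpha w v.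
        measure (mu ((th ^^ n) w)) (shiftn 1 ` cyl th ell alpha ((th ^^ (n - 1)) w) [v ! (n - 1)])
          / Bfun M th kappa r ((th ^^ n) w)
        \<le> Lam th lam w n * measure (mu w) (cyl th ell alpha w v) / exp (phin phi th w n x - real n * PG)
      \<and> Lam th lam w n * measure (mu w) (cyl th ell alpha w v) / exp (phin phi th w n x - real n * PG)
        \<le> Bfun M th kappa r ((th ^^ n) w)
          * measure (mu ((th ^^ n) w)) (shiftn 1 ` cyl th ell alpha ((th ^^ (n - 1)) w) [v ! (n - 1)]))
   \<and> (\<forall>Obi I. big_image M th ell alpha Obi I \<longrightarrow>
        (AE w in M. w \<in> Obi \<longrightarrow> Dfun M th ell alpha mu w > 0)
      \<and> (AE w in M. \<forall>n \<ge> 1. (th ^^ n) w \<in> Obi \<longrightarrow>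
           (\<forall>v \<in> words th ell alpha w n. \<forall>x \<in> cyl th ell alpha w v.
              Dfun M th ell alpha mu ((th ^^ n) w) / Bfun M th kappa r ((th ^^ n) w)
              \<le> Lam th lam w n * measure (mu w) (cyl th ell alpha w v) / exp (phin phi th w n x - real n * PG)
            \<and> Lam th lam w n * measure (mu w) (cyl th ell alpha w v) / exp (phin phi th w n x - real n * PG)
              \<le> Bfun M th kappa r ((th ^^ n) w))))"
proof -
  note H1 = assms(19) and bij = assms(3) and th = assms(2)
  have orbit: "AE w in M. \<forall>k. regular_fibre M th ell alpha phi PG lam mu kappa r ((th ^^ k) w)"
    using AE_orbit[OF th assms(5) regular_fibre_AE[OF assms(4,17,18) H1]] .
  show ?thesis
  proof (intro conjI allI impI, goal_cases gibbs Dfun_positive gibbs_Dfun)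
    case gibbs
    show ?case using orbit AE_space by eventually_elim (rule cylinder_gibbs_bounds[OF H1 bij th])
  next
    case (Dfun_positive Obi I)
    show ?case using orbit AE_space
    proof eventually_elim
      case (elim w)
      have "thinv M th w \<in> space M" using measurable_space[OF assms(4) elim(2)] .
      then have "0 < ell (thinv M th w)" using assms(8) by (auto intro: order.strict_trans[OF zero_less_one])
      then show ?case
        using Dfun_pos[OF elim(1)[rule_format, of 0, simplified] Dfun_positive _ th_thinv[OF bij elim(2)]]
        by blast
    qed
  next
    case gibbs_Dfun
    show ?case using orbit AE_space
      by eventually_elim (blast dest: cylinder_gibbs_bounds_Dfun[OF H1 bij th])
  qed
qed

end
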